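(* Assume $1-4M_0>0$ and set $\Xi:=1-4M_0$, $\lambda_1:=\frac{-1+\sqrt{\Xi}}{2}$, $\lambda_2:=\frac{-1-\sqrt{\Xi}}{2}$. For $x\in\Omega_0$ put $$P(x):=\frac{1}{\sqrt\Xi}\big(\lambda_1\partial_x u_0(x)-M_0+2\rho_0(x)\big),\qquad Q(x):=\frac{1}{\sqrt\Xi}\big(M_0-2\rho_0(x)-\lambda_2\partial_x u_0(x)\big),$$ and for $t\ge 0$, $x\in\Omega_0$, $$D(t,x):=\frac{2\rho_0(x)}{M_0}+\frac{P(x)}{\lambda_1}e^{\lambda_1 t}+\frac{Q(x)}{\lambda_2}e^{\lambda_2 t}$$ (this is the expression of $\partial_x\eta(t,x)$ for a classical solution of the Lagrangian system, as long as it exists). Then there exist $t>0$ and $x\in\Omega_0$ with $D(t,x)\le 0$ if and only if there exists $x\in\Omega_0$ such that $$\partial_x u_0(x)<0,\qquad M_0-2\rho_0(x)<\lambda_1\partial_x u_0(x),$$ and $$2\rho_0(x)\le\big(\lambda_1\partial_x u_0(x)-M_0+2\rho_0(x)\big)^{-\lambda_2/\sqrt\Xi}\big(\lambda_2\partial_x u_0(x)-M_0+2\rho_0(x)\big)^{\lambda_1/\sqrt\Xi}.$$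
   Context: $\Omega_0=(a_0,b_0)$ is a bounded open interval, $\rho_0\in H^2(\Omega_0)$ with $\rho_0>0$ on $\Omega_0$, $u_0\in H^3(\Omega_0)$ (both continuous up to the boundary), and $M_0:=\int_{\Omega_0}\rho_0(x)\,dx>0$. Note $D(0,x)=1$ for all $x$. *)

theory Defs
  imports "HOL-Analysis.Analysis"
begin

definition Xi :: "real \<Rightarrow> real" where
  "Xi M0 = 1 - 4 * M0"

definition lam1 :: "real \<Rightarrow> real" where
  "lam1 M0 = (-1 + sqrt (Xi M0)) / 2"

definition lam2 :: "real \<Rightarrow> real" where
  "lam2 M0 = (-1 - sqrt (Xi M0)) / 2"

definition Pcoef :: "real \<Rightarrow> real \<Rightarrow> real \<Rightarrow> real" where
  "Pcoef M0 r du = (1 / sqrt (Xi M0)) * (lam1 M0 * du - M0 + 2 * r)"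

definition Qcoef :: "real \<Rightarrow> real \<Rightarrow> real \<Rightarrow> real" where
  "Qcoef M0 r du = (1 / sqrt (Xi M0)) * (M0 - 2 * r - lam2 M0 * du)"

definition Dfun :: "real \<Rightarrow> (real \<Rightarrow> real) \<Rightarrow> (real \<Rightarrow> real) \<Rightarrow> real \<Rightarrow> real \<Rightarrow> real" where
  "Dfun M0 rho0 u0 t x =
     2 * rho0 x / M0
     + Pcoef M0 (rho0 x) (deriv u0 x) / lam1 M0 * exp (lam1 M0 * t)
     + Qcoef M0 (rho0 x) (deriv u0 x) / lam2 M0 * exp (lam2 M0 * t)"

end

theory Submission
  imports Defs
begin

text \<open>Write \<open>\<lambda>\<^sub>1 = -\<alpha>\<close>, \<open>\<lambda>\<^sub>2 = -\<beta>\<close>, so that \<open>0 < \<alpha> < \<beta>\<close>, \<open>\<alpha> \<beta> = M\<^sub>0\<close> and \<open>\<beta> - \<alpha> = sqrt \<Xi>\<close>.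
  At a fixed \<open>x\<close> put \<open>A = \<lambda>\<^sub>1 u\<^sub>0' - M\<^sub>0 + 2 \<rho>\<^sub>0\<close> and \<open>B = \<lambda>\<^sub>2 u\<^sub>0' - M\<^sub>0 + 2 \<rho>\<^sub>0\<close>; then
  \<open>M\<^sub>0 D(t) = 2 \<rho>\<^sub>0 - (\<beta> A exp (-\<alpha> t) - \<alpha> B exp (-\<beta> t)) / (\<beta> - \<alpha>)\<close> and \<open>A - B = (\<beta> - \<alpha>) u\<^sub>0'\<close>.
  If \<open>u\<^sub>0' \<ge> 0\<close> or \<open>A \<le> 0\<close>, then \<open>D\<close> stays positive for \<open>t > 0\<close>. If \<open>0 < A < B\<close>, weighted
  AM-GM bounds \<open>\<beta> A exp (-\<alpha> t) - \<alpha> B exp (-\<beta> t)\<close> by \<open>(\<beta> - \<alpha>) A powr (\<beta>/(\<beta>-\<alpha>)) B powr (-\<alpha>/(\<beta>-\<alpha>))\<close>,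
  with equality at the time \<open>t = ln (B/A) / (\<beta> - \<alpha>) > 0\<close> where \<open>A exp (-\<alpha> t) = B exp (-\<beta> t)\<close>.\<close>

lemma weighted_exp_diff_le:
  fixes \<alpha> \<beta> a b t :: real
  assumes "0 < \<alpha>" "\<alpha> < \<beta>" "0 < a" "0 < b"
  shows "\<beta> * a * exp (-\<alpha> * t) - \<alpha> * b * exp (-\<beta> * t)
           \<le> (\<beta> - \<alpha>) * (a powr (\<beta> / (\<beta> - \<alpha>)) * b powr (-\<alpha> / (\<beta> - \<alpha>)))"
proof -
  define s where "s = \<beta> - \<alpha>"
  define K where "K = a powr (\<beta> / s) * b powr (-\<alpha> / s)"
  define w where "w = \<alpha> / \<beta>"
  have s: "s > 0" and \<beta>: "\<beta> > 0" and w: "0 \<le> w" "w \<le> 1" "1 - w = s / \<beta>"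
    using assms by (auto simp: s_def w_def field_simps)
  have K: "K > 0" unfolding K_def using assms by simp
  have "K powr (s / \<beta>) = a powr (\<beta> / s * (s / \<beta>)) * b powr (-\<alpha> / s * (s / \<beta>))"
    unfolding K_def using assms by (simp add: powr_mult powr_powr)
  also have "\<dots> = a * b powr (-w)" using s \<beta> assms by (simp add: w_def)
  finally have K_pow: "K powr (1 - w) = a * b powr (-w)" using w by simp
  have "exp (-\<beta> * t) powr w = exp (-\<alpha> * t)"
    using \<beta> by (simp add: powr_def w_def)
  then have bY_pow: "(b * exp (-\<beta> * t)) powr w = b powr w * exp (-\<alpha> * t)"
    using assms by (simp add: powr_mult)
  have "K powr (1 - w) * (b * exp (-\<beta> * t)) powr w = a * exp (-\<alpha> * t)"
    unfolding K_pow bY_pow using assms by (simp add: powr_minus field_simps)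
  moreover have "K powr (1 - w) * (b * exp (-\<beta> * t)) powr w \<le> (1 - w) * K + w * (b * exp (-\<beta> * t))"
    using Youngs_inequality_0[of "1 - w" w K "b * exp (-\<beta> * t)"] w K assms by simp
  ultimately have "\<beta> * (a * exp (-\<alpha> * t)) \<le> \<beta> * ((1 - w) * K + w * (b * exp (-\<beta> * t)))"
    using \<beta> by simp
  also have "\<dots> = (\<beta> * (1 - w)) * K + (\<beta> * w) * (b * exp (-\<beta> * t))"
    by (simp add: algebra_simps)
  also have "\<dots> = s * K + \<alpha> * b * exp (-\<beta> * t)"
    using \<beta> w by (simp add: w_def)
  finally show ?thesis unfolding K_def s_def by simp
qed

lemma weighted_exp_diff_at_crossing:
  fixes \<alpha> \<beta> a b :: real
  assumes "\<alpha> < \<beta>" "0 < a" "0 < b"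
  defines "t \<equiv> ln (b / a) / (\<beta> - \<alpha>)"
  shows "\<beta> * a * exp (-\<alpha> * t) - \<alpha> * b * exp (-\<beta> * t)
           = (\<beta> - \<alpha>) * (a powr (\<beta> / (\<beta> - \<alpha>)) * b powr (-\<alpha> / (\<beta> - \<alpha>)))"
proof -
  define s where "s = \<beta> - \<alpha>"
  define K where "K = a powr (\<beta> / s) * b powr (-\<alpha> / s)"
  have s: "s > 0" using assms by (simp add: s_def)
  have X: "exp (-\<alpha> * t) = (b / a) powr (-\<alpha> / s)" and Y: "exp (-\<beta> * t) = (b / a) powr (-\<beta> / s)"
    using assms s by (simp_all add: t_def s_def powr_def)
  have "a * exp (-\<alpha> * t) = a powr 1 * a powr (\<alpha> / s) * b powr (-\<alpha> / s)"
    unfolding X using assms by (simp add: powr_divide powr_minus_divide divide_simps)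
  also have "\<dots> = a powr (1 + \<alpha> / s) * b powr (-\<alpha> / s)"
    by (simp add: powr_add)
  also have "1 + \<alpha> / s = \<beta> / s" using s by (simp add: s_def field_simps)
  finally have aX: "a * exp (-\<alpha> * t) = K" unfolding K_def .
  have "b * exp (-\<beta> * t) = b powr 1 * b powr (-\<beta> / s) * a powr (\<beta> / s)"
    unfolding Y using assms by (simp add: powr_divide powr_minus_divide divide_simps)
  also have "\<dots> = b powr (1 - \<beta> / s) * a powr (\<beta> / s)"
    using powr_add[of b 1 "-\<beta> / s"] by simp
  also have "1 - \<beta> / s = -\<alpha> / s" using s by (simp add: s_def field_simps)
  finally have bY: "b * exp (-\<beta> * t) = K" unfolding K_def by simp
  have "\<beta> * a * exp (-\<alpha> * t) - \<alpha> * b * exp (-\<beta> * t) = (\<beta> - \<alpha>) * K"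
    using aX bY by (metis mult.assoc left_diff_distrib)
  then show ?thesis unfolding K_def s_def .
qed

lemma ex_pos_time_weighted_exp_diff_nonpos_iff:
  fixes \<alpha> \<beta> r d :: real
  assumes \<alpha>: "0 < \<alpha>" and \<alpha>\<beta>: "\<alpha> < \<beta>" and r: "0 < r"
  defines "A \<equiv> 2 * r - \<alpha> * \<beta> - \<alpha> * d"
    and "B \<equiv> 2 * r - \<alpha> * \<beta> - \<beta> * d"
  shows "(\<exists>t>0. 2 * r - (\<beta> * A * exp (-\<alpha> * t) - \<alpha> * B * exp (-\<beta> * t)) / (\<beta> - \<alpha>) \<le> 0)
           \<longleftrightarrow> d < 0 \<and> 0 < A \<and> 2 * r \<le> A powr (\<beta> / (\<beta> - \<alpha>)) * B powr (-\<alpha> / (\<beta> - \<alpha>))"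
    (is "(\<exists>t>0. ?E t \<le> 0) \<longleftrightarrow> _")
proof -
  define s where "s = \<beta> - \<alpha>"
  have s: "s > 0" and \<beta>: "\<beta> > 0" using \<alpha> \<alpha>\<beta> by (auto simp: s_def)
  have BA: "A - B = s * d" by (simp add: A_def B_def s_def algebra_simps)
  have AB_iff: "A < B \<longleftrightarrow> d < 0"
  proof -
    have "A < B \<longleftrightarrow> s * d < 0" using BA by linarith
    also have "\<dots> \<longleftrightarrow> d < 0" using s by (simp add: mult_less_0_iff)
    finally show ?thesis .
  qed
  show ?thesis
  proof
    assume "\<exists>t>0. ?E t \<le> 0"
    then obtain t where t: "t > 0" and Et: "?E t \<le> 0" by blast
    define X where "X = exp (-\<alpha> * t)"
    define Y where "Y = exp (-\<beta> * t)"
    define G where "G = \<beta> * X - \<alpha> * Y"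
    have Et': "?E t = 2 * r - (\<beta> * A * X - \<alpha> * B * Y) / s" by (simp add: X_def Y_def s_def)
    have "Y < X" "0 < Y" using t \<alpha>\<beta> by (simp_all add: X_def Y_def)
    then have G_pos: "0 < G" unfolding G_def using \<alpha> \<alpha>\<beta> by (smt (verit) mult_strict_mono)
    have G_le: "G \<le> s"
      using weighted_exp_diff_le[OF \<alpha> \<alpha>\<beta>, of 1 1 t] by (simp add: G_def X_def Y_def s_def)
    have d: "d < 0"
    proof (rule ccontr)
      assume "\<not> d < 0"
      have "2 * r - (\<beta> * A * X - \<alpha> * B * Y) / s
              = 2 * r * (1 - G / s) + \<alpha> * \<beta> * (G / s) + \<alpha> * \<beta> * d * (X - Y) / s"
        unfolding A_def B_def G_def using s by (simp add: field_simps)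
      moreover have "2 * r * (1 - G / s) \<ge> 0" using G_le s r by simp
      moreover have "\<alpha> * \<beta> * (G / s) > 0" using G_pos s \<alpha> \<beta> by simp
      moreover have "\<alpha> * \<beta> * d * (X - Y) / s \<ge> 0"
        using \<open>\<not> d < 0\<close> \<open>Y < X\<close> s \<alpha> \<beta> by simp
      ultimately show False using Et Et' by linarith
    qed
    have A: "0 < A"
    proof (rule ccontr)
      assume "\<not> 0 < A"
      \<comment> \<open>\<open>\<beta> A X - \<alpha> B Y = A G + \<alpha> (A - B) Y\<close>, and both terms are negative\<close>
      have "A * G \<le> 0" using \<open>\<not> 0 < A\<close> G_pos by (simp add: mult_nonpos_nonneg)
      moreover have "\<alpha> * (s * d) * Y < 0" using \<alpha> s d \<open>0 < Y\<close> by (simp add: mult_pos_neg mult_neg_pos)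
      moreover have "\<beta> * A * X - \<alpha> * B * Y = A * G + \<alpha> * (A - B) * Y"
        by (simp add: G_def algebra_simps)
      ultimately have "\<beta> * A * X - \<alpha> * B * Y < 0" using BA by simp
      then have "?E t > 0" unfolding Et' using s r by (smt (verit) divide_neg_pos)
      then show False using Et by simp
    qed
    have "0 < B" using A AB_iff d by simp
    then have "?E t \<ge> 2 * r - A powr (\<beta> / s) * B powr (-\<alpha> / s)"
      using weighted_exp_diff_le[OF \<alpha> \<alpha>\<beta> A, of B t] s by (simp add: s_def field_simps)
    then show "d < 0 \<and> 0 < A \<and> 2 * r \<le> A powr (\<beta> / (\<beta> - \<alpha>)) * B powr (-\<alpha> / (\<beta> - \<alpha>))"
      using Et d A by (simp add: s_def)
  next
    assume H: "d < 0 \<and> 0 < A \<and> 2 * r \<le> A powr (\<beta> / (\<beta> - \<alpha>)) * B powr (-\<alpha> / (\<beta> - \<alpha>))"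
    then have A: "0 < A" and AB: "A < B" using AB_iff by auto
    define t where "t = ln (B / A) / s"
    have "t > 0" unfolding t_def using A AB s by simp
    moreover have "?E t = 2 * r - A powr (\<beta> / s) * B powr (-\<alpha> / s)"
      using weighted_exp_diff_at_crossing[OF \<alpha>\<beta> A, of B] A AB s
      by (simp add: t_def s_def)
    ultimately show "\<exists>t>0. ?E t \<le> 0" using H by (auto simp: s_def)
  qed
qed

lemma ex_pos_time_Dfun_nonpos_iff:
  fixes M :: real and rho u :: "real \<Rightarrow> real"
  assumes M: "0 < M" and Xi: "1 - 4 * M > 0" and rho: "0 < rho x"
  shows "(\<exists>t>0. Dfun M rho u t x \<le> 0) \<longleftrightarrow>
           deriv u x < 0 \<and> M - 2 * rho x < lam1 M * deriv u x \<and>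
           2 * rho x \<le> (lam1 M * deriv u x - M + 2 * rho x) powr (- lam2 M / sqrt (Xi M))
                       * (lam2 M * deriv u x - M + 2 * rho x) powr (lam1 M / sqrt (Xi M))"
proof -
  define r where "r = rho x"
  define d where "d = deriv u x"
  define s where "s = sqrt (Xi M)"
  define \<alpha> where "\<alpha> = (1 - s) / 2"
  define \<beta> where "\<beta> = (1 + s) / 2"
  have s: "0 < s" and s2: "s\<^sup>2 = 1 - 4 * M" using Xi by (simp_all add: s_def Xi_def)
  then have "s < 1" using M by (smt (verit) one_le_power)
  then have \<alpha>: "0 < \<alpha>" and \<alpha>\<beta>: "\<alpha> < \<beta>" using s by (simp_all add: \<alpha>_def \<beta>_def)
  have \<beta>: "0 < \<beta>" using \<alpha> \<alpha>\<beta> by simp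
  have s_eq: "\<beta> - \<alpha> = s" by (simp add: \<alpha>_def \<beta>_def field_simps)
  have M_eq: "M = \<alpha> * \<beta>" using s2 by (simp add: \<alpha>_def \<beta>_def field_simps power2_eq_square)
  have lam1: "lam1 M = -\<alpha>" and lam2: "lam2 M = -\<beta>"
    by (simp_all add: lam1_def lam2_def \<alpha>_def \<beta>_def s_def field_simps)
  define A where "A = 2 * r - \<alpha> * \<beta> - \<alpha> * d"
  define B where "B = 2 * r - \<alpha> * \<beta> - \<beta> * d"
  have P: "Pcoef M r d = A / s"
    unfolding Pcoef_def A_def lam1 s_def[symmetric] by (simp add: M_eq)
  have Q: "Qcoef M r d = - B / s"
    unfolding Qcoef_def B_def lam2 s_def[symmetric] by (simp add: M_eq field_simps)
  have "Dfun M rho u t x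
        = (2 * r - (\<beta> * A * exp (-\<alpha> * t) - \<alpha> * B * exp (-\<beta> * t)) / (\<beta> - \<alpha>)) / M" for t
    unfolding Dfun_def r_def[symmetric] d_def[symmetric] P Q lam1 lam2 s_eq
    using \<alpha> \<beta> s by (simp add: M_eq field_simps)
  then have "(\<exists>t>0. Dfun M rho u t x \<le> 0)
             \<longleftrightarrow> d < 0 \<and> 0 < A \<and> 2 * r \<le> A powr (\<beta> / (\<beta> - \<alpha>)) * B powr (-\<alpha> / (\<beta> - \<alpha>))"
    using ex_pos_time_weighted_exp_diff_nonpos_iff[OF \<alpha> \<alpha>\<beta>, of r d] rho M
    by (simp add: A_def B_def r_def divide_le_0_iff)
  moreover have "M - 2 * r < lam1 M * d \<longleftrightarrow> 0 < A" "lam1 M * d - M + 2 * r = A"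
    "lam2 M * d - M + 2 * r = B"
    unfolding lam1 lam2 by (auto simp: A_def B_def M_eq)
  moreover have "- lam2 M / sqrt (Xi M) = \<beta> / (\<beta> - \<alpha>)" "lam1 M / sqrt (Xi M) = -\<alpha> / (\<beta> - \<alpha>)"
    by (simp_all add: lam1 lam2 s_eq flip: s_def)
  ultimately show ?thesis by (simp only: r_def d_def)
qed

theorem proposition3p1:
  fixes a0 b0 M0 :: real and rho0 u0 :: "real \<Rightarrow> real"
  assumes ab: "a0 < b0"
    and rho_cont: "continuous_on {a0..b0} rho0"
    and rho_pos: "\<forall>x\<in>{a0<..<b0}. rho0 x > 0"
    and u_cont: "continuous_on {a0..b0} u0"
    and u_diff: "\<forall>x\<in>{a0<..<b0}. u0 differentiable (at x)"
    and du_cont: "continuous_on {a0<..<b0} (deriv u0)"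
    and M0_def: "M0 = integral {a0..b0} rho0"
    and M0_pos: "M0 > 0"
    and Xi_pos: "1 - 4 * M0 > 0"
  shows "(\<exists>t>0. \<exists>x\<in>{a0<..<b0}. Dfun M0 rho0 u0 t x \<le> 0) \<longleftrightarrow>
         (\<exists>x\<in>{a0<..<b0}.
            deriv u0 x < 0 \<and>
            M0 - 2 * rho0 x < lam1 M0 * deriv u0 x \<and>
            2 * rho0 x \<le>
              (lam1 M0 * deriv u0 x - M0 + 2 * rho0 x) powr (- lam2 M0 / sqrt (Xi M0))
              * (lam2 M0 * deriv u0 x - M0 + 2 * rho0 x) powr (lam1 M0 / sqrt (Xi M0)))"
  using ex_pos_time_Dfun_nonpos_iff[OF M0_pos Xi_pos] rho_pos by blast

end
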